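(* Let $p(\cdot)\in\mathcal{P}^{\log}(\mathbb{R}^n)$ with $1<p_-\le p_+<\infty$ and $p_\infty=p_-$, and let $\omega$ be a weight such that $\omega(x)\lesssim(1+|x|)^\gamma$ for some $\gamma\in\mathbb{R}$. If $\omega\in RH_{p_+}$, then for every cube $Q$, \[ \|\chi_Q\|_{L^{p(\cdot)}_\omega}\approx\begin{cases}\left[\int_Q\omega(x)^{p_-}dx\right]^{1/p_-}, & \text{if } \ell(Q)>1,\\[1ex] \left[\int_Q\omega(x)^{p_-(Q)}dx\right]^{1/p_-(Q)}, & \text{if } \ell(Q)\le1,\end{cases} \] with implicit constants independent of $Q$.
   Context: $\ell(Q)$ is the side length of $Q$; $p_-(Q)=\operatorname{ess\,inf}_{x\in Q}p(x)$, $p_-=p_-(\mathbb{R}^n)$, $p_+=\operatorname{ess\,sup}p$. $p(\cdot)\in\mathcal{P}^{\log}(\mathbb{R}^n)$ means $0<p_-\le p_+<\infty$ and there are $C,C_\infty>0$ and $p_-\le p_\infty\le p_+$ with $|p(x)-p(y)|\le C/(-\log|x-y|)$ for $|x-y|\le1/2$ and $|p(x)-p_\infty|\le C_\infty/\log(e+|x|)$. A weight is a locally integrable $\omega$ with $0<\omega<\infty$ a.e.; $\|f\|_{L^{p(\cdot)}_\omega}:=\|f\omega\|_{L^{p(\cdot)}}$ with $\|g\|_{L^{p(\cdot)}}=\inf\{\lambda>0:\int|g/\lambda|^{p(x)}dx\le1\}$. $\omega\in RH_s$ ($s>1$) means there is $C>0$ with $\left(\frac1{|Q|}\int_Q\omega^s\right)^{1/s}\le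 C\frac1{|Q|}\int_Q\omega$ for every cube $Q$. *)

theory Defs
  imports "HOL-Analysis.Analysis"
begin

definition cube :: "'a::euclidean_space \<Rightarrow> real \<Rightarrow> 'a set" where
  "cube a l = cbox a (a + l *\<^sub>R One)"

definition ess_inf_on :: "('a::euclidean_space \<Rightarrow> real) \<Rightarrow> 'a set \<Rightarrow> real" where
  "ess_inf_on p E = Sup {c. AE x in lebesgue. x \<in> E \<longrightarrow> c \<le> p x}"

definition p_minus :: "('a::euclidean_space \<Rightarrow> real) \<Rightarrow> real" where
  "p_minus p = ess_inf_on p UNIV"

definition p_plus :: "('a::euclidean_space \<Rightarrow> real) \<Rightarrow> real" where
  "p_plus p = Inf {c. AE x in lebesgue. p x \<le> c}"

definition LH0 :: "('a::euclidean_space \<Rightarrow> real) \<Rightarrow> bool" where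
  "LH0 p \<longleftrightarrow> (\<exists>C>0. \<forall>x y. 0 < norm (x - y) \<and> norm (x - y) \<le> 1/2 \<longrightarrow>
      \<bar>p x - p y\<bar> \<le> C / (- ln (norm (x - y))))"

definition LH_infty :: "('a::euclidean_space \<Rightarrow> real) \<Rightarrow> real \<Rightarrow> bool" where
  "LH_infty p pinf \<longleftrightarrow> (\<exists>C>0. \<forall>x. \<bar>p x - pinf\<bar> \<le> C / ln (exp 1 + norm x))"

definition P_log :: "('a::euclidean_space \<Rightarrow> real) \<Rightarrow> bool" where
  "P_log p \<longleftrightarrow> p \<in> borel_measurable lebesgue \<and> 0 < p_minus p
     \<and> (\<exists>c. AE x in lebesgue. p x \<le> c) \<and> LH0 p
     \<and> (\<exists>pinf. p_minus p \<le> pinf \<and> pinf \<le> p_plus p \<and> LH_infty p pinf)"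

definition weight :: "('a::euclidean_space \<Rightarrow> real) \<Rightarrow> bool" where
  "weight w \<longleftrightarrow> (\<forall>K. compact K \<longrightarrow> set_integrable lebesgue K w) \<and> (AE x in lebesgue. 0 < w x)"

definition RH :: "real \<Rightarrow> ('a::euclidean_space \<Rightarrow> real) \<Rightarrow> bool" where
  "RH s w \<longleftrightarrow> (\<exists>C>0. \<forall>a l. l > 0 \<longrightarrow>
      set_integrable lebesgue (cube a l) (\<lambda>x. w x powr s) \<and>
      ((LINT x:cube a l|lebesgue. w x powr s) / measure lebesgue (cube a l)) powr (1/s)
        \<le> C * ((LINT x:cube a l|lebesgue. w x) / measure lebesgue (cube a l)))"

definition modular :: "('a::euclidean_space \<Rightarrow> real) \<Rightarrow> ('a \<Rightarrow> real) \<Rightarrow> ennreal" where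
  "modular p g = (\<integral>\<^sup>+ x. ennreal (\<bar>g x\<bar> powr p x) \<partial>lebesgue)"

definition var_norm :: "('a::euclidean_space \<Rightarrow> real) \<Rightarrow> ('a \<Rightarrow> real) \<Rightarrow> real" where
  "var_norm p g = Inf {t. t > 0 \<and> modular p (\<lambda>x. g x / t) \<le> 1}"

definition weighted_norm :: "('a::euclidean_space \<Rightarrow> real) \<Rightarrow> ('a \<Rightarrow> real) \<Rightarrow> ('a \<Rightarrow> real) \<Rightarrow> real" where
  "weighted_norm p w f = var_norm p (\<lambda>x. f x * w x)"

end

theory Submission
  imports Defs
begin

(* Let Q be a cube with V = |Q|, and let q = p_- if l(Q) > 1 and q = p_-(Q) otherwise, so that
   q <= p <= p_+ = s on Q.

   Upper bound: pointwise u^p(x) <= V^((q - p(x))/q) (u^q + V^((s - q)/q) u^s). The factor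
   V^((q - p(x))/q) is at most 1 for large cubes, and for small cubes it is bounded by local
   log-Hoelder continuity, since (p(x) - p_-(Q)) log(1/l(Q)) is bounded. Integrating with
   u = w/t, and using the reverse Hoelder inequality to bound the s-mean of w by its q-mean,
   shows that the modular is at most 1 for t a fixed multiple of (int_Q w^q)^(1/q).

   Lower bound: Young's inequality with beta = V^(-1/q') gives
   beta int_Q w <= t (modular (w chi_Q / t) + int_Q beta^(p'(x))). The last integral is bounded:
   for small cubes because beta >= 1 and p' <= q', and for large cubes by the decay condition,
   since p'(x) is close to q' outside a box whose volume is compensated by beta^(s'). The reverse
   Hoelder inequality (which by Jensen holds for every exponent between 1 and s) turns int_Q w
   back into (int_Q w^q)^(1/q). *)

lemma powr_le_mixed_powers:
  fixes a M p q s :: real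
  assumes "0 \<le> a" "0 < M" "q \<le> p" "p \<le> s"
  shows "a powr p \<le> M powr (p - q) * (a powr q + M powr (q - s) * a powr s)"
proof (cases "a = 0")
  case True then show ?thesis by simp
next
  case False
  hence a: "0 < a" using assms by auto
  show ?thesis
  proof (cases "a \<le> M")
    case True
    have "a powr (p - q) \<le> M powr (p - q)" using True a assms by (intro powr_mono2) auto
    hence "a powr q * a powr (p - q) \<le> a powr q * M powr (p - q)" by (intro mult_left_mono) auto
    hence "a powr p \<le> M powr (p - q) * a powr q" by (simp add: powr_add[symmetric] mult.commute)
    moreover have "0 \<le> M powr (p - q) * (M powr (q - s) * a powr s)" by simp
    ultimately show ?thesis unfolding distrib_left by linarith
  next
    case False
    have "a powr (p - s) \<le> M powr (p - s)" using False a assms by (intro powr_mono2') auto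
    hence "a powr s * a powr (p - s) \<le> a powr s * M powr (p - s)" by (intro mult_left_mono) auto
    hence "a powr p \<le> M powr (p - s) * a powr s" by (simp add: powr_add[symmetric] mult.commute)
    also have "M powr (p - s) = M powr (p - q) * M powr (q - s)" by (simp add: powr_add[symmetric])
    finally have "a powr p \<le> M powr (p - q) * (M powr (q - s) * a powr s)" by simp
    moreover have "0 \<le> M powr (p - q) * a powr q" by simp
    ultimately show ?thesis unfolding distrib_left by linarith
  qed
qed

lemma mult_le_powr_add_conjugate_powr:
  fixes a b p :: real
  assumes "0 \<le> a" "0 \<le> b" "1 < p"
  shows "a * b \<le> a powr p + b powr (p / (p - 1))"
proof -
  have "a * b \<le> a powr p / p + b powr (p / (p - 1)) / (p / (p - 1))"
    using assms by (intro Youngs_inequality) (auto simp: field_simps)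
  also have "\<dots> \<le> a powr p + b powr (p / (p - 1))"
    using assms by (intro add_mono divide_left_mono[of 1, simplified]) (auto simp: field_simps)
  finally show ?thesis .
qed

lemma le_add_scaled_powr:
  fixes g L r :: real
  assumes "0 \<le> g" "0 < L" "1 \<le> r"
  shows "g \<le> L + L powr (1 - r) * g powr r"
proof (cases "g \<le> L")
  case True
  then show ?thesis using powr_ge_zero[of L "1 - r"] powr_ge_zero[of g r]
    by (smt (verit) mult_nonneg_nonneg)
next
  case False
  hence g: "0 < g" using assms by auto
  have "L powr (1 - r) * g powr r = g * (g / L) powr (r - 1)"
    using g assms by (simp add: powr_divide powr_diff field_simps)
  moreover have "1 \<le> (g / L) powr (r - 1)" using False assms by (intro ge_one_powr_ge_zero) auto
  ultimately show ?thesis using g assms(2) by (smt (verit) mult_le_cancel_left1)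
qed

lemma powr_le_add_powr:
  fixes w q s :: real
  assumes "0 < w" "1 \<le> q" "q \<le> s"
  shows "w powr q \<le> w + w powr s"
proof (cases "w \<le> 1")
  case True
  have "w powr q \<le> w powr 1" using True assms by (intro powr_mono') auto
  then have "w powr q \<le> w" using assms by simp
  then show ?thesis using powr_ge_zero[of w s] by linarith
next
  case False
  have "w powr q \<le> w powr s" using False assms by (intro powr_mono) auto
  then show ?thesis using assms by simp
qed

lemma LH0_imp_continuous:
  fixes p :: "'a::euclidean_space \<Rightarrow> real"
  assumes "LH0 p"
  shows "continuous_on UNIV p"
proof -
  obtain C where C: "C > 0" "\<And>x y. 0 < norm (x - y) \<Longrightarrow> norm (x - y) \<le> 1/2 \<Longrightarrow>
      \<bar>p x - p y\<bar> \<le> C / (- ln (norm (x - y)))"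
    using assms unfolding LH0_def by blast
  show ?thesis unfolding continuous_on_iff
  proof (intro ballI allI impI)
    fix x :: 'a and e :: real
    assume e: "0 < e"
    define d where "d = min (1/2) (exp (- C / e))"
    show "\<exists>d>0. \<forall>x'\<in>UNIV. dist x' x < d \<longrightarrow> dist (p x') (p x) < e"
    proof (intro exI[of _ d] conjI ballI impI)
      show "0 < d" unfolding d_def by simp
      fix x' assume x': "dist x' x < d"
      show "dist (p x') (p x) < e"
      proof (cases "x' = x")
        case True then show ?thesis using e by simp
      next
        case False
        define r where "r = norm (x' - x)"
        have r: "0 < r" "r \<le> 1/2" "r < exp (- C / e)"
          using False x' unfolding r_def d_def dist_norm by auto
        have "ln r < ln (exp (- C / e))" using r by (subst ln_less_cancel_iff) auto
        hence lr: "C / e < - ln r" by simp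
        have "0 < C / e" using C e by simp
        hence pos: "0 < (- ln r) * (C / e)" using lr by (intro mult_pos_pos) linarith+
        have "\<bar>p x' - p x\<bar> \<le> C / (- ln r)" using C(2)[of x' x] r unfolding r_def by simp
        also have "\<dots> < C / (C / e)" by (rule divide_strict_left_mono[OF lr C(1) pos])
        also have "\<dots> = e" using C e by simp
        finally show ?thesis by (simp add: dist_real_def)
      qed
    qed
  qed
qed

lemma LH_infty_decay:
  fixes p :: "'a::euclidean_space \<Rightarrow> real"
  assumes "LH_infty p q"
  obtains C where "\<And>x. \<bar>p x - q\<bar> * ln (exp 1 + norm x) \<le> C"
proof -
  obtain C where C: "\<And>x. \<bar>p x - q\<bar> \<le> C / ln (exp 1 + norm x)"
    using assms unfolding LH_infty_def by blast
  have "\<bar>p x - q\<bar> * ln (exp 1 + norm x) \<le> C" for x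
  proof -
    have L: "1 \<le> ln (exp 1 + norm x)" by (subst ln_ge_iff) (auto simp: add_pos_nonneg)
    have "\<bar>p x - q\<bar> * ln (exp 1 + norm x) \<le> C / ln (exp 1 + norm x) * ln (exp 1 + norm x)"
      using C[of x] L by (intro mult_right_mono) auto
    also have "\<dots> = C" using L by simp
    finally show ?thesis .
  qed
  then show ?thesis using that by blast
qed

lemma LH_infty_bounded:
  fixes p :: "'a::euclidean_space \<Rightarrow> real"
  assumes "LH_infty p q"
  obtains C where "\<And>x. \<bar>p x - q\<bar> \<le> C"
proof -
  obtain C where C: "\<And>x. \<bar>p x - q\<bar> * ln (exp 1 + norm x) \<le> C"
    using LH_infty_decay[OF assms] by blast
  have "\<bar>p x - q\<bar> \<le> \<bar>p x - q\<bar> * ln (exp 1 + norm x)" for x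
    using mult_left_mono[of 1 "ln (exp 1 + norm x)" "\<bar>p x - q\<bar>"]
    by (simp add: ln_ge_iff add_pos_nonneg)
  then show ?thesis using that C by (meson order_trans)
qed

lemma continuous_AE_ge_imp_ge:
  fixes f :: "'a::euclidean_space \<Rightarrow> real"
  assumes cont: "continuous_on UNIV f" and "open U"
    and ae: "AE x in lebesgue. x \<in> U \<longrightarrow> c \<le> f x" and x: "x \<in> closure U"
  shows "c \<le> f x"
proof -
  have "U \<inter> {y. f y < c} = {}"
  proof (rule ccontr)
    assume ne: "U \<inter> {y. f y < c} \<noteq> {}"
    obtain N where N: "negligible N" "{x. \<not> (x \<in> U \<longrightarrow> c \<le> f x)} \<subseteq> N"
      using ae unfolding eventually_ae_filter_negligible by blast
    have "negligible (U \<inter> {y. f y < c})"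
      using N(2) by (intro negligible_subset[OF N(1)]) auto
    moreover have "open (U \<inter> {y. f y < c})"
      using \<open>open U\<close> cont by (intro open_Int open_Collect_less) auto
    ultimately show False using open_not_negligible ne by blast
  qed
  hence "U \<subseteq> {y. c \<le> f y}" by auto
  moreover have "closed {y. c \<le> f y}" using cont by (intro closed_Collect_le) auto
  ultimately show ?thesis using x closure_minimal by blast
qed

lemma p_minus_le:
  fixes p :: "'a::euclidean_space \<Rightarrow> real"
  assumes cont: "continuous_on UNIV p" and "bdd_below (range p)"
  shows "p_minus p \<le> p x"
proof -
  let ?S = "{c. AE x in lebesgue. x \<in> UNIV \<longrightarrow> c \<le> p x}"
  obtain m where "\<And>y. m \<le> p y" using \<open>bdd_below (range p)\<close> by (auto simp: bdd_below_def)
  hence "m \<in> ?S" by simp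
  moreover have "c \<le> p x" if "c \<in> ?S" for c
    using continuous_AE_ge_imp_ge[OF cont open_UNIV, of c x] that by simp
  ultimately show ?thesis unfolding p_minus_def ess_inf_on_def by (intro cSup_least) auto
qed

lemma le_p_plus:
  fixes p :: "'a::euclidean_space \<Rightarrow> real"
  assumes cont: "continuous_on UNIV p" and "bdd_above (range p)"
  shows "p x \<le> p_plus p"
proof -
  let ?S = "{c. AE x in lebesgue. p x \<le> c}"
  obtain M where "\<And>y. p y \<le> M" using \<open>bdd_above (range p)\<close> by (auto simp: bdd_above_def)
  hence "M \<in> ?S" by simp
  moreover have "p x \<le> c" if "c \<in> ?S" for c
    using continuous_AE_ge_imp_ge[OF continuous_on_minus[OF cont] open_UNIV, of "- c" x] that
    by simp
  ultimately show ?thesis unfolding p_plus_def by (intro cInf_greatest) auto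
qed

lemma ess_inf_on_cube_attained:
  fixes p :: "'a::euclidean_space \<Rightarrow> real"
  assumes cont: "continuous_on UNIV p" and "0 < l"
  obtains y where "y \<in> cube a l" "ess_inf_on p (cube a l) = p y"
    "\<And>x. x \<in> cube a l \<Longrightarrow> p y \<le> p x"
proof -
  let ?B = "box a (a + l *\<^sub>R One)"
  have "?B \<noteq> {}" using \<open>0 < l\<close> by (auto simp: box_ne_empty inner_add_left)
  hence closure_box: "closure ?B = cube a l" unfolding cube_def by (rule closure_box)
  have "cube a l \<noteq> {}" using \<open>?B \<noteq> {}\<close> closure_subset[of ?B] closure_box by blast
  moreover have "compact (cube a l)" unfolding cube_def by simp
  ultimately obtain y where y: "y \<in> cube a l" "\<And>x. x \<in> cube a l \<Longrightarrow> p y \<le> p x"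
    using continuous_attains_inf[of "cube a l" p] continuous_on_subset[OF cont] by blast
  let ?S = "{c. AE x in lebesgue. x \<in> cube a l \<longrightarrow> c \<le> p x}"
  have "p y \<in> ?S" using y by (auto intro!: AE_I2)
  moreover have "c \<le> p y" if "c \<in> ?S" for c
  proof (rule continuous_AE_ge_imp_ge[OF cont open_box])
    from that have "AE x in lebesgue. x \<in> cube a l \<longrightarrow> c \<le> p x" by simp
    then show "AE x in lebesgue. x \<in> ?B \<longrightarrow> c \<le> p x"
      by eventually_elim (use box_subset_cbox in \<open>auto simp: cube_def\<close>)
    show "y \<in> closure ?B" using y closure_box by simp
  qed
  ultimately have "Sup ?S = p y" by (intro cSup_eq_maximum) auto
  thus ?thesis using that y unfolding ess_inf_on_def by auto
qed

lemma sets_cube [measurable]: "cube a l \<in> sets lebesgue"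
  unfolding cube_def by simp

lemma emeasure_cube:
  fixes a :: "'a::euclidean_space"
  assumes "0 < l"
  shows "emeasure lebesgue (cube a l) = ennreal (l ^ DIM('a))"
proof -
  have "emeasure lebesgue (cube a l) = ennreal (\<Prod>b\<in>(Basis::'a set). l)"
    unfolding cube_def using assms by (simp add: emeasure_lborel_cbox_eq inner_add_left)
  thus ?thesis by simp
qed

lemma measure_cube:
  fixes a :: "'a::euclidean_space"
  assumes "0 < l"
  shows "measure lebesgue (cube a l) = l ^ DIM('a)"
  using emeasure_cube[OF assms, of a] assms unfolding measure_def by simp

lemma norm_diff_le_cube:
  fixes a :: "'a::euclidean_space"
  assumes "x \<in> cube a l" "y \<in> cube a l"
  shows "norm (x - y) \<le> real DIM('a) * l"
proof -
  have "\<bar>(x - y) \<bullet> b\<bar> \<le> l" if "b \<in> Basis" for b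
    using assms that unfolding cube_def mem_box
    by (auto simp: inner_diff_left inner_add_left abs_le_iff) (smt (verit, best))+
  hence "(\<Sum>b\<in>Basis. \<bar>(x - y) \<bullet> b\<bar>) \<le> real DIM('a) * l"
    using sum_bounded_above[of Basis "\<lambda>b. \<bar>(x - y) \<bullet> b\<bar>" l] by simp
  thus ?thesis using norm_le_l1[of "x - y"] by linarith
qed

lemma emeasure_centered_box:
  assumes "0 < r"
  shows "emeasure lebesgue (cbox (- r *\<^sub>R One) (r *\<^sub>R One :: 'a::euclidean_space))
    = ennreal ((2 * r) ^ DIM('a))"
proof -
  have "emeasure lebesgue (cbox (- r *\<^sub>R One) (r *\<^sub>R One :: 'a)) = ennreal (\<Prod>b\<in>(Basis::'a set). 2 * r)"
    using assms by (simp add: emeasure_lborel_cbox_eq inner_diff_left algebra_simps)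
  thus ?thesis by simp
qed

lemma integral_indicator_mult_pos:
  fixes f :: "'a \<Rightarrow> real"
  assumes int: "integrable M (\<lambda>x. indicator Q x * f x)" and pos: "AE x in M. 0 < f x"
    and Q: "Q \<in> sets M" "emeasure M Q \<noteq> 0"
  shows "0 < (LINT x|M. indicator Q x * f x)"
proof -
  have nn: "AE x in M. 0 \<le> indicator Q x * f x"
    using pos by eventually_elim (auto simp: indicator_def)
  have "(LINT x|M. indicator Q x * f x) \<noteq> 0"
  proof
    assume "(LINT x|M. indicator Q x * f x) = 0"
    hence "AE x in M. indicator Q x * f x = 0"
      using integral_nonneg_eq_0_iff_AE[OF int nn] by simp
    hence "AE x in M. x \<notin> Q"
      using pos by eventually_elim (auto simp: indicator_def split: if_splits)
    hence "Q \<in> null_sets M" using AE_iff_null_sets[OF Q(1)] by simp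
    hence "emeasure M Q = 0" by (rule null_setsD1)
    with Q(2) show False by simp
  qed
  thus ?thesis using integral_nonneg_AE[OF nn] by linarith
qed

text \<open>Jensen's inequality up to a factor 2: integrate \<open>g \<le> L + L\<^sup>1\<^sup>-\<^sup>r g\<^sup>r\<close>, where
  \<open>L\<close> is the \<open>r\<close>-th power mean of \<open>g\<close> over \<open>Q\<close>.\<close>
lemma mean_le_powr_mean:
  fixes g :: "'a \<Rightarrow> real" and M :: "'a measure" and Q :: "'a set" and r :: real
  defines "V \<equiv> measure M Q"
    and "I \<equiv> LINT x|M. indicator Q x * g x"
    and "Ir \<equiv> LINT x|M. indicator Q x * g x powr r"
  assumes ig: "integrable M (\<lambda>x. indicator Q x * g x)"
    and igr: "integrable M (\<lambda>x. indicator Q x * g x powr r)"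
    and g: "AE x in M. 0 \<le> g x" and r: "1 \<le> r"
    and Q: "Q \<in> sets M" "emeasure M Q < \<infinity>" "0 < V" and Ir: "0 < Ir"
  shows "I / V \<le> 2 * (Ir / V) powr (1/r)"
proof -
  define L where "L = (Ir / V) powr (1/r)"
  have L: "0 < L" using Q Ir unfolding L_def by simp
  have iQ: "integrable M (indicator Q :: 'a \<Rightarrow> real)"
    using Q by (simp add: integrable_real_indicator)
  have "I \<le> (LINT x|M. indicator Q x * L + L powr (1 - r) * (indicator Q x * g x powr r))"
    unfolding I_def
  proof (rule integral_mono_AE[OF ig])
    show "integrable M (\<lambda>x. indicator Q x * L + L powr (1 - r) * (indicator Q x * g x powr r))"
      using iQ igr by simp
    show "AE x in M. indicator Q x * g x
        \<le> indicator Q x * L + L powr (1 - r) * (indicator Q x * g x powr r)"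
      using g by eventually_elim (use le_add_scaled_powr[OF _ L r] in \<open>auto simp: indicator_def\<close>)
  qed
  also have "\<dots> = L * V + L powr (1 - r) * Ir"
    using iQ igr Q unfolding V_def Ir_def by (simp add: mult.commute)
  also have "L powr (1 - r) * Ir = L * V"
  proof -
    have "L powr (1 - r) = L / L powr r" using L by (simp add: powr_diff)
    moreover have "L powr r = Ir / V" using Q Ir r unfolding L_def by (simp add: powr_powr)
    ultimately have "L powr (1 - r) * Ir = L / (Ir / V) * Ir" by simp
    also have "\<dots> = L * V" using Q Ir by simp
    finally show ?thesis .
  qed
  finally have "I \<le> 2 * L * V" by simp
  then show ?thesis using Q unfolding L_def by (simp add: pos_divide_le_eq)
qed

lemma var_norm_le:
  assumes "0 < t" "modular p (\<lambda>x. f x / t) \<le> 1"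
  shows "var_norm p f \<le> t"
  unfolding var_norm_def using assms by (intro cInf_lower bdd_belowI[of _ 0]) auto

lemma le_var_norm:
  assumes "0 < t0" "modular p (\<lambda>x. f x / t0) \<le> 1"
    and "\<And>t. 0 < t \<Longrightarrow> modular p (\<lambda>x. f x / t) \<le> 1 \<Longrightarrow> c \<le> t"
  shows "c \<le> var_norm p f"
  unfolding var_norm_def using assms by (intro cInf_greatest) auto

lemma integrable_indicator_powr_between:
  fixes w :: "'a \<Rightarrow> real"
  assumes iw: "integrable M (\<lambda>x. indicator Q x * w x)"
    and iws: "integrable M (\<lambda>x. indicator Q x * w x powr s)"
    and w: "AE x in M. 0 < w x" and q: "1 \<le> q" "q \<le> s"
  shows "integrable M (\<lambda>x. indicator Q x * w x powr q)"
proof (rule Bochner_Integration.integrable_bound[OF Bochner_Integration.integrable_add[OF iw iws]])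
  have "(\<lambda>x. indicator Q x * w x) \<in> borel_measurable M"
    using iw by (rule borel_measurable_integrable)
  moreover have "indicator Q x * w x powr q = (indicator Q x * w x) powr q" for x
    by (simp add: indicator_def)
  ultimately show "(\<lambda>x. indicator Q x * w x powr q) \<in> borel_measurable M" by simp
  show "AE x in M. norm (indicator Q x * w x powr q) \<le> norm (indicator Q x * w x + indicator Q x * w x powr s)"
    using w by eventually_elim (use powr_le_add_powr q in \<open>auto simp: indicator_def\<close>)
qed

lemma RH_mean_bounds:
  fixes w :: "'a \<Rightarrow> real" and M :: "'a measure" and Q :: "'a set" and q s CR :: real
  defines "V \<equiv> measure M Q"
    and "I1 \<equiv> LINT x|M. indicator Q x * w x"
    and "Iq \<equiv> LINT x|M. indicator Q x * w x powr q"
    and "Is \<equiv> LINT x|M. indicator Q x * w x powr s"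
  assumes Q: "Q \<in> sets M" "emeasure M Q < \<infinity>" "0 < V"
    and iw: "integrable M (\<lambda>x. indicator Q x * w x)"
    and iws: "integrable M (\<lambda>x. indicator Q x * w x powr s)"
    and wpos: "AE x in M. 0 < w x"
    and RH: "(Is / V) powr (1/s) \<le> CR * (I1 / V)" and CR: "0 < CR"
    and q: "1 < q" "q \<le> s"
  shows "0 < Iq"
    and "(Iq / V) powr (1/q) \<le> 2 * CR * (I1 / V)"
    and "(Is / V) powr (1/s) \<le> 2 * CR * (Iq / V) powr (1/q)"
proof -
  have "emeasure M Q \<noteq> 0" using Q(3) unfolding V_def by (auto simp: measure_def)
  have iwq: "integrable M (\<lambda>x. indicator Q x * w x powr q)"
    using integrable_indicator_powr_between[OF iw iws wpos] q by simp
  have wrpos: "AE x in M. 0 < w x powr r" for r using wpos by eventually_elim simp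
  have Iq: "0 < Iq" and Is: "0 < Is" unfolding Iq_def Is_def
    using integral_indicator_mult_pos[OF _ wrpos Q(1) \<open>emeasure M Q \<noteq> 0\<close>] iwq iws by auto
  show "0 < Iq" by (fact Iq)
  have "I1 / V \<le> 2 * (Iq / V) powr (1/q)"
    unfolding I1_def Iq_def V_def
    by (rule mean_le_powr_mean[OF iw iwq _ _ Q[unfolded V_def]])
      (use wpos q Iq in \<open>auto simp: Iq_def elim: AE_mp\<close>)
  hence I1: "I1 / V \<le> 2 * (Iq / V) powr (1/q)" .
  have "(\<lambda>x. indicator Q x * (w x powr q) powr (s / q)) = (\<lambda>x. indicator Q x * w x powr s)"
    using q by (simp add: powr_powr)
  hence "Iq / V \<le> 2 * (Is / V) powr (1 / (s / q))"
    using mean_le_powr_mean[OF iwq, of "s / q"] iws Q Is q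
    unfolding Iq_def Is_def V_def by simp
  hence "(Iq / V) powr (1/q) \<le> (2 * (Is / V) powr (1 / (s / q))) powr (1/q)"
    using Iq Q q by (intro powr_mono2) auto
  also have "\<dots> = 2 powr (1/q) * (Is / V) powr (1/s)"
    using q by (simp add: powr_mult powr_powr)
  also have "\<dots> \<le> 2 * (Is / V) powr (1/s)"
    using q powr_mono[of "1/q" 1 2] by (intro mult_right_mono) auto
  finally have Iq_Is: "(Iq / V) powr (1/q) \<le> 2 * (Is / V) powr (1/s)" .
  show "(Iq / V) powr (1/q) \<le> 2 * CR * (I1 / V)" using Iq_Is RH by linarith
  show "(Is / V) powr (1/s) \<le> 2 * CR * (Iq / V) powr (1/q)"
    using RH mult_left_mono[OF I1, of CR] CR by linarith
qed

lemma powr_le_scaled_mixed_powers: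
  fixes u V q r s B :: real
  assumes "0 \<le> u" "0 < V" "0 < q" "q \<le> r" "r \<le> s" and B: "V powr ((q - r) / q) \<le> B"
  shows "u powr r \<le> B * (u powr q + V powr ((s - q) / q) * u powr s)"
proof -
  define M where "M = V powr (- 1 / q)"
  have "0 < M" unfolding M_def using assms by simp
  then have "u powr r \<le> M powr (r - q) * (u powr q + M powr (q - s) * u powr s)"
    using assms by (intro powr_le_mixed_powers) simp_all
  also have "M powr (r - q) = V powr ((q - r) / q)"
    unfolding M_def powr_powr using assms by (intro arg_cong[where f = "(powr) V"]) (simp add: field_simps)
  also have "M powr (q - s) = V powr ((s - q) / q)"
    unfolding M_def powr_powr using assms by (intro arg_cong[where f = "(powr) V"]) (simp add: field_simps)
  finally show ?thesis using B by (smt (verit) mult_right_mono powr_ge_zero mult_nonneg_nonneg)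
qed

lemma mixed_moments_le_one:
  fixes V Iq Is q s B K k :: real
  defines "t \<equiv> k * Iq powr (1/q)"
  assumes V: "0 < V" and Iq: "0 < Iq" and Is: "0 \<le> Is" and q: "1 \<le> q" "q \<le> s"
    and B: "0 \<le> B" and K: "0 \<le> K" "(Is / V) powr (1/s) \<le> K * (Iq / V) powr (1/q)"
    and k: "max 1 (B * (1 + K powr s)) \<le> k"
  shows "B * (Iq / t powr q + V powr ((s - q) / q) * (Is / t powr s)) \<le> 1"
proof -
  define c where "c = V powr ((s - q) / q)"
  have k1: "1 \<le> k" using k by simp
  have Iq_t: "Iq / t powr q = 1 / k powr q"
    unfolding t_def using k1 Iq q by (simp add: powr_mult powr_powr)
  have t: "0 < t" unfolding t_def using k1 Iq by simp
  have "Is = V * ((Is / V) powr (1/s)) powr s"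
    using V Is q by (simp add: powr_powr)
  also have "\<dots> \<le> V * (K * (Iq / V) powr (1/q)) powr s"
    using K V q by (intro mult_left_mono powr_mono2) auto
  finally have "c * (Is / t powr s) \<le> c * (V * (K * (Iq / V) powr (1/q)) powr s / t powr s)"
    using t by (intro mult_left_mono divide_right_mono) (auto simp: c_def)
  also have "\<dots> = K powr s / k powr s"
  proof -
    have "c * V = V powr ((s - q) / q + 1)" unfolding c_def using V by (simp add: powr_add)
    also have "(s - q) / q + 1 = s / q" using q by (simp add: field_simps)
    finally have c: "c = V powr (s / q) / V" using V by (simp add: field_simps)
    have X: "(K * (Iq / V) powr (1/q)) powr s = K powr s * (Iq powr (s/q) / V powr (s/q))"
      using K(1) Iq V by (simp add: powr_mult powr_powr powr_divide)
    have ts: "t powr s = k powr s * Iq powr (s/q)"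
      unfolding t_def using k1 Iq by (simp add: powr_mult powr_powr)
    show ?thesis unfolding X ts c using V Iq k1 by (simp add: field_simps)
  qed
  finally have Is_t: "c * (Is / t powr s) \<le> K powr s / k powr s" .
  have "1 / k powr q \<le> 1 / k" "K powr s / k powr s \<le> K powr s / k"
    using k1 q powr_mono[of 1 q k] powr_mono[of 1 s k] by (auto intro!: divide_left_mono)
  hence "B * (Iq / t powr q + c * (Is / t powr s)) \<le> B * ((1 + K powr s) / k)"
    using Iq_t Is_t B by (intro mult_left_mono) (auto simp: add_divide_distrib)
  also have "\<dots> \<le> 1" using k k1 by (simp add: field_simps)
  finally show ?thesis unfolding c_def .
qed

lemma modular_indicator_le_one:
  fixes p w :: "'a::euclidean_space \<Rightarrow> real" and Q :: "'a set" and q s B K k :: real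
  defines "V \<equiv> measure lebesgue Q"
    and "Iq \<equiv> LINT x|lebesgue. indicator Q x * w x powr q"
    and "Is \<equiv> LINT x|lebesgue. indicator Q x * w x powr s"
  assumes Q: "0 < V"
    and iwq: "integrable lebesgue (\<lambda>x. indicator Q x * w x powr q)"
    and iws: "integrable lebesgue (\<lambda>x. indicator Q x * w x powr s)"
    and wpos: "AE x in lebesgue. 0 < w x"
    and q: "1 \<le> q" "q \<le> s" and pQ: "\<And>x. x \<in> Q \<Longrightarrow> q \<le> p x \<and> p x \<le> s"
    and B: "\<And>x. x \<in> Q \<Longrightarrow> V powr ((q - p x) / q) \<le> B"
    and Iq: "0 < Iq" and K: "0 \<le> K" "(Is / V) powr (1/s) \<le> K * (Iq / V) powr (1/q)"
    and k: "max 1 (B * (1 + K powr s)) \<le> k"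
  shows "modular p (\<lambda>x. indicator Q x * w x / (k * Iq powr (1/q))) \<le> 1"
proof -
  define t where "t = k * Iq powr (1/q)"
  define c where "c = V powr ((s - q) / q)"
  have t: "0 < t" unfolding t_def using k Iq by simp
  have "Q \<noteq> {}" using Q unfolding V_def by auto
  hence B0: "0 \<le> B" using B by (meson ex_in_conv order_trans powr_ge_zero)
  have pointwise: "(w x / t) powr p x \<le> B * (w x powr q / t powr q + c * (w x powr s / t powr s))"
    if "x \<in> Q" "0 < w x" for x
    using powr_le_scaled_mixed_powers[of "w x / t" V q "p x" s B] pQ[OF \<open>x \<in> Q\<close>] B[OF \<open>x \<in> Q\<close>]
      that t Q q unfolding c_def by (simp add: powr_divide)
  have "modular p (\<lambda>x. indicator Q x * w x / t)
      \<le> (\<integral>\<^sup>+x. ennreal (B * (indicator Q x * w x powr q / t powr q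
          + c * (indicator Q x * w x powr s / t powr s))) \<partial>lebesgue)"
    unfolding modular_def
  proof (intro nn_integral_mono_AE, use wpos in eventually_elim)
    case (elim x)
    show ?case using pointwise[of x] elim t by (cases "x \<in> Q") (auto intro!: ennreal_leI)
  qed
  also have "\<dots> = ennreal (B * (Iq / t powr q + c * (Is / t powr s)))"
    using iwq iws B0 t unfolding Iq_def Is_def c_def
    by (subst nn_integral_eq_integral) (auto intro!: integral_nonneg_AE)
  also have "B * (Iq / t powr q + c * (Is / t powr s)) \<le> 1"
    unfolding t_def c_def
    by (rule mixed_moments_le_one[OF Q Iq _ q B0 K k]) (auto simp: Is_def intro!: integral_nonneg_AE)
  hence "ennreal (B * (Iq / t powr q + c * (Is / t powr s))) \<le> 1"
    using ennreal_leI[of _ 1] by simp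
  finally show ?thesis unfolding t_def .
qed

lemma integral_le_of_modular_le_one:
  fixes p f :: "'a::euclidean_space \<Rightarrow> real"
  assumes p [measurable]: "p \<in> borel_measurable lebesgue" and Q [measurable]: "Q \<in> sets lebesgue"
    and f: "integrable lebesgue f" "AE x in lebesgue. 0 \<le> f x" "\<And>x. x \<notin> Q \<Longrightarrow> f x = 0"
    and p1: "\<And>x. x \<in> Q \<Longrightarrow> 1 < p x" and \<beta>: "0 \<le> \<beta>" and t: "0 < t"
    and modular: "modular p (\<lambda>x. f x / t) \<le> 1"
    and D: "(\<integral>\<^sup>+x. ennreal (indicator Q x * \<beta> powr (p x / (p x - 1))) \<partial>lebesgue) \<le> ennreal D"
      "0 \<le> D"
  shows "\<beta> * (LINT x|lebesgue. f x) \<le> (1 + D) * t"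
proof -
  have [measurable]: "f \<in> borel_measurable lebesgue"
    using f(1) by (rule borel_measurable_integrable)
  have "AE x in lebesgue. 0 \<le> f x * (\<beta> / t)"
    using f(2) by eventually_elim (use \<beta> t in simp)
  hence "ennreal ((LINT x|lebesgue. f x) * (\<beta> / t)) = (\<integral>\<^sup>+x. ennreal (f x * (\<beta> / t)) \<partial>lebesgue)"
    using f(1) by (subst nn_integral_eq_integral) simp_all
  also have "\<dots> \<le> (\<integral>\<^sup>+x. ennreal (\<bar>f x / t\<bar> powr p x)
      + ennreal (indicator Q x * \<beta> powr (p x / (p x - 1))) \<partial>lebesgue)"
  proof (intro nn_integral_mono_AE, use f(2) in eventually_elim)
    case (elim x)
    have "f x * (\<beta> / t) \<le> \<bar>f x / t\<bar> powr p x + indicator Q x * \<beta> powr (p x / (p x - 1))"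
    proof (cases "x \<in> Q")
      case True
      have "f x / t * \<beta> \<le> (f x / t) powr p x + \<beta> powr (p x / (p x - 1))"
        using elim t \<beta> p1[OF True] by (intro mult_le_powr_add_conjugate_powr) auto
      then show ?thesis using True elim t by simp
    qed (simp add: f(3))
    hence "ennreal (f x * (\<beta> / t))
        \<le> ennreal (\<bar>f x / t\<bar> powr p x + indicator Q x * \<beta> powr (p x / (p x - 1)))"
      by (rule ennreal_leI)
    then show ?case by (simp add: ennreal_plus)
  qed
  also have "\<dots> = modular p (\<lambda>x. f x / t)
      + (\<integral>\<^sup>+x. ennreal (indicator Q x * \<beta> powr (p x / (p x - 1))) \<partial>lebesgue)"
    unfolding modular_def by (intro nn_integral_add) measurable
  also have "\<dots> \<le> ennreal (1 + D)"
    using add_mono[OF modular D(1)] D(2) by (simp add: ennreal_plus)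
  finally have "(LINT x|lebesgue. f x) * (\<beta> / t) \<le> 1 + D"
    using D(2) by (subst (asm) ennreal_le_iff) auto
  thus ?thesis using t by (simp add: field_simps)
qed

lemma weighted_norm_indicator_bounds:
  fixes p w :: "'a::euclidean_space \<Rightarrow> real" and Q :: "'a set" and q s B CR D :: real
  defines "V \<equiv> measure lebesgue Q"
    and "Iq \<equiv> LINT x|lebesgue. indicator Q x * w x powr q"
  assumes p: "p \<in> borel_measurable lebesgue"
    and Q: "Q \<in> sets lebesgue" "emeasure lebesgue Q < \<infinity>" "0 < V"
    and iw: "integrable lebesgue (\<lambda>x. indicator Q x * w x)"
    and iws: "integrable lebesgue (\<lambda>x. indicator Q x * w x powr s)"
    and wpos: "AE x in lebesgue. 0 < w x"
    and RH: "((LINT x|lebesgue. indicator Q x * w x powr s) / V) powr (1/s)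
      \<le> CR * ((LINT x|lebesgue. indicator Q x * w x) / V)" and CR: "0 < CR"
    and q: "1 < q" "q \<le> s" and pQ: "\<And>x. x \<in> Q \<Longrightarrow> q \<le> p x \<and> p x \<le> s"
    and B: "\<And>x. x \<in> Q \<Longrightarrow> V powr ((q - p x) / q) \<le> B"
    and D: "(\<integral>\<^sup>+x. ennreal (indicator Q x * (V powr ((1 - q) / q)) powr (p x / (p x - 1))) \<partial>lebesgue)
      \<le> ennreal D" "0 \<le> D"
  shows "Iq powr (1/q) / (2 * CR * (1 + D)) \<le> weighted_norm p w (indicator Q)"
    and "weighted_norm p w (indicator Q) \<le> max 1 (B * (1 + (2 * CR) powr s)) * Iq powr (1/q)"
proof -
  note means = RH_mean_bounds[OF Q[unfolded V_def] iw iws wpos RH[unfolded V_def] CR q]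
  have iwq: "integrable lebesgue (\<lambda>x. indicator Q x * w x powr q)"
    using integrable_indicator_powr_between[OF iw iws wpos] q by simp
  define k where "k = max 1 (B * (1 + (2 * CR) powr s))"
  have Iq: "0 < Iq" using means(1) unfolding Iq_def .
  have t0: "0 < k * Iq powr (1/q)" unfolding k_def using Iq by simp
  have upper: "modular p (\<lambda>x. indicator Q x * w x / (k * Iq powr (1/q))) \<le> 1"
    unfolding k_def Iq_def
    by (rule modular_indicator_le_one[OF Q(3)[unfolded V_def] iwq iws wpos _ q(2) pQ
          B[unfolded V_def] means(1) _ means(3)]) (use q CR in auto)
  show "weighted_norm p w (indicator Q) \<le> k * Iq powr (1/q)"
    unfolding weighted_norm_def by (rule var_norm_le[OF t0 upper])
  show "Iq powr (1/q) / (2 * CR * (1 + D)) \<le> weighted_norm p w (indicator Q)"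
    unfolding weighted_norm_def
  proof (rule le_var_norm[OF t0 upper])
    fix t assume t: "0 < t" and modular: "modular p (\<lambda>x. indicator Q x * w x / t) \<le> 1"
    have p1: "\<And>x. x \<in> Q \<Longrightarrow> 1 < p x" using pQ q by force
    define \<beta> where "\<beta> = V powr ((1 - q) / q)"
    define I1 where "I1 = (LINT x|lebesgue. indicator Q x * w x)"
    have Young: "\<beta> * I1 \<le> (1 + D) * t"
      unfolding I1_def \<beta>_def
      by (rule integral_le_of_modular_le_one[OF p Q(1) iw _ _ _ _ t modular D])
        (use wpos p1 in \<open>auto simp: indicator_def elim: AE_mp\<close>)
    have "Iq powr (1/q) \<le> 2 * CR * (\<beta> * I1)"
    proof -
      have "Iq powr (1/q) = V powr (1/q) * (Iq / V) powr (1/q)"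
        using Q Iq by (simp add: powr_divide)
      also have "\<dots> \<le> V powr (1/q) * (2 * CR * (I1 / V))"
        using means(2) unfolding I1_def Iq_def V_def by (intro mult_left_mono) auto
      also have "\<dots> = 2 * CR * (V powr (1/q) / V * I1)" by (simp add: field_simps)
      also have "V powr (1/q) / V = \<beta>"
        unfolding \<beta>_def using Q q by (simp add: diff_divide_distrib powr_diff)
      finally show ?thesis .
    qed
    also have "\<dots> \<le> 2 * CR * ((1 + D) * t)" using Young CR by (intro mult_left_mono) auto
    finally show "Iq powr (1/q) / (2 * CR * (1 + D)) \<le> t"
      using CR D(2) by (simp add: pos_divide_le_eq ac_simps)
  qed
qed

lemma mem_centered_box_of_ln_less:
  fixes x :: "'a::euclidean_space"
  assumes "ln (exp 1 + norm x) < L"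
  shows "x \<in> cbox (- exp L *\<^sub>R One) (exp L *\<^sub>R One)"
proof -
  have "ln (exp 1 + norm x) < ln (exp L)" using assms by simp
  hence "exp 1 + norm x < exp L" by (subst (asm) ln_less_cancel_iff) (auto simp: add_pos_nonneg)
  hence "norm x < exp L" using exp_gt_zero[of 1] by linarith
  thus ?thesis unfolding mem_box using Basis_le_norm[of _ x] by (fastforce simp: abs_le_iff)
qed

lemma conjugate_powr_le_split:
  fixes x :: "'a::euclidean_space" and \<beta> r q s C m :: real
  defines "\<rho> \<equiv> exp (- ln \<beta> / m)"
  assumes \<beta>: "0 < \<beta>" "\<beta> \<le> 1" and q: "1 < q" "q \<le> r" "r \<le> s"
    and decay: "(r - q) * ln (exp 1 + norm x) \<le> C" and m: "0 < m"
  shows "\<beta> powr (r / (r - 1)) \<le> exp (m * C / (q - 1)^2) * \<beta> powr (q / (q - 1))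
     + \<beta> powr (s / (s - 1)) * indicator (cbox (- \<rho> *\<^sub>R One) (\<rho> *\<^sub>R One)) x"
proof (cases "m * ln (exp 1 + norm x) < - ln \<beta>")
  case True
  hence "x \<in> cbox (- \<rho> *\<^sub>R One) (\<rho> *\<^sub>R One)"
    unfolding \<rho>_def using m by (intro mem_centered_box_of_ln_less) (simp add: field_simps)
  moreover have "s / (s - 1) \<le> r / (r - 1)" using q by (simp add: field_simps)
  hence "\<beta> powr (r / (r - 1)) \<le> \<beta> powr (s / (s - 1))" using \<beta> by (intro powr_mono') auto
  ultimately show ?thesis by (simp add: add_increasing)
next
  case False
  define gap where "gap = q / (q - 1) - r / (r - 1)"
  have gap: "gap = (r - q) / ((q - 1) * (r - 1))"
    unfolding gap_def using q by (simp add: field_simps)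
  have "0 \<le> gap" unfolding gap using q by simp
  have "gap * ln (exp 1 + norm x) \<le> C / (q - 1)^2"
  proof -
    have ln: "1 \<le> ln (exp 1 + norm x)" by (subst ln_ge_iff) (auto simp: add_pos_nonneg)
    have "gap * ln (exp 1 + norm x) = ((r - q) * ln (exp 1 + norm x)) / ((q - 1) * (r - 1))"
      unfolding gap by simp
    also have "\<dots> \<le> C / ((q - 1) * (r - 1))" using decay q by (intro divide_right_mono) auto
    also have "\<dots> \<le> C / (q - 1)^2"
    proof (rule divide_left_mono)
      show "0 \<le> C" using decay ln q by (smt (verit) mult_nonneg_nonneg)
      show "(q - 1)^2 \<le> (q - 1) * (r - 1)" using q by (simp add: power2_eq_square mult_left_mono)
    qed (use q in simp)
    finally show ?thesis .
  qed
  hence "gap * (- ln \<beta>) \<le> m * C / (q - 1)^2"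
    using False \<open>0 \<le> gap\<close> m mult_left_mono[of "- ln \<beta>" "m * ln (exp 1 + norm x)" gap]
    by (smt (verit) mult.left_commute mult_left_mono times_divide_eq_right)
  moreover have "\<beta> powr (r / (r - 1)) = exp (gap * (- ln \<beta>)) * \<beta> powr (q / (q - 1))"
    using \<beta> unfolding gap_def by (simp add: powr_def exp_add[symmetric] algebra_simps)
  ultimately show ?thesis by (simp add: mult_right_mono add_increasing2)
qed

lemma conjugate_powr_mult_self:
  fixes V q :: real
  assumes "0 < V" "1 < q"
  shows "(V powr ((1 - q) / q)) powr (q / (q - 1)) * V = 1"
proof -
  have "(V powr ((1 - q) / q)) powr (q / (q - 1)) = V powr ((1 - q) / q * (q / (q - 1)))"
    by (rule powr_powr)
  also have "(1 - q) / q * (q / (q - 1)) = - 1" using assms by (simp add: field_simps)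
  finally show ?thesis using assms by (simp add: powr_minus)
qed

lemma conjugate_integral_le_large:
  fixes p :: "'a::euclidean_space \<Rightarrow> real" and Q :: "'a set" and q s C V :: real
  defines "m \<equiv> real DIM('a) * (s - 1) / s"
  assumes Q: "Q \<in> sets lebesgue" "emeasure lebesgue Q = ennreal V" "1 \<le> V"
    and q: "1 < q" and p: "\<And>x. q \<le> p x" "\<And>x. p x \<le> s"
    and decay: "\<And>x. (p x - q) * ln (exp 1 + norm x) \<le> C"
  shows "(\<integral>\<^sup>+x. ennreal (indicator Q x * (V powr ((1 - q) / q)) powr (p x / (p x - 1))) \<partial>lebesgue)
    \<le> ennreal (exp (m * C / (q - 1)^2) + 2 ^ DIM('a))"
proof -
  define \<beta> where "\<beta> = V powr ((1 - q) / q)"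
  define K where "K = exp (m * C / (q - 1)^2)"
  define \<rho> where "\<rho> = exp (- ln \<beta> / m)"
  define Cb where "Cb = cbox (- \<rho> *\<^sub>R One) (\<rho> *\<^sub>R One :: 'a)"
  have s: "1 < s" using p[of 0] q by linarith
  have m: "0 < m" unfolding m_def using s by simp
  have "(1 - q) / q \<le> 0" using q by (simp add: divide_nonpos_pos)
  hence "\<beta> \<le> V powr 0" unfolding \<beta>_def using Q by (intro powr_mono) auto
  hence \<beta>: "0 < \<beta>" "\<beta> \<le> 1" unfolding \<beta>_def using Q by auto
  have \<rho>: "0 < \<rho>" unfolding \<rho>_def by simp
  have "Cb \<in> sets lebesgue" unfolding Cb_def by simp
  have "ennreal (indicator Q x * \<beta> powr (p x / (p x - 1)))
      \<le> ennreal (K * \<beta> powr (q / (q - 1))) * indicator Q x + ennreal (\<beta> powr (s / (s - 1))) * indicator Cb x"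
    for x
  proof (cases "x \<in> Q")
    case True
    have "ennreal (\<beta> powr (p x / (p x - 1)))
        \<le> ennreal (K * \<beta> powr (q / (q - 1)) + \<beta> powr (s / (s - 1)) * indicator Cb x)"
      using conjugate_powr_le_split[OF \<beta> q p(1) p(2) decay m, of x] unfolding K_def Cb_def \<rho>_def
      by (rule ennreal_leI)
    then show ?thesis using True unfolding K_def by (cases "x \<in> Cb") (simp_all add: ennreal_plus)
  qed simp
  hence "(\<integral>\<^sup>+x. ennreal (indicator Q x * \<beta> powr (p x / (p x - 1))) \<partial>lebesgue)
      \<le> (\<integral>\<^sup>+x. ennreal (K * \<beta> powr (q / (q - 1))) * indicator Q x
          + ennreal (\<beta> powr (s / (s - 1))) * indicator Cb x \<partial>lebesgue)"
    by (intro nn_integral_mono)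
  also have "\<dots> = ennreal (K * \<beta> powr (q / (q - 1))) * emeasure lebesgue Q
        + ennreal (\<beta> powr (s / (s - 1))) * emeasure lebesgue Cb"
    using Q(1) \<open>Cb \<in> sets lebesgue\<close> by (simp add: nn_integral_add nn_integral_cmult_indicator)
  also have "\<dots> = ennreal (K * (\<beta> powr (q / (q - 1)) * V) + \<beta> powr (s / (s - 1)) * (2 * \<rho>) ^ DIM('a))"
    using Q(2,3) \<rho> unfolding Cb_def emeasure_centered_box[OF \<rho>]
    by (simp add: K_def ennreal_mult[symmetric] ennreal_plus mult.assoc)
  also have "\<beta> powr (q / (q - 1)) * V = 1"
    unfolding \<beta>_def using Q q by (intro conjugate_powr_mult_self) auto
  also have "\<beta> powr (s / (s - 1)) * (2 * \<rho>) ^ DIM('a) = 2 ^ DIM('a)"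
  proof -
    have "\<rho> ^ DIM('a) = exp (real DIM('a) * (- ln \<beta> / m))"
      unfolding \<rho>_def by (rule exp_of_nat_mult[symmetric])
    also have "real DIM('a) * (- ln \<beta> / m) = - (s / (s - 1)) * ln \<beta>"
      unfolding m_def using s by (simp add: field_simps)
    finally have "\<beta> powr (s / (s - 1)) * \<rho> ^ DIM('a) = 1"
      using \<beta> by (simp add: powr_def exp_add[symmetric])
    thus ?thesis by (simp add: power_mult_distrib)
  qed
  finally show ?thesis unfolding \<beta>_def K_def by simp
qed

lemma conjugate_integral_le_small:
  fixes p :: "'a::euclidean_space \<Rightarrow> real" and Q :: "'a set" and q V :: real
  assumes Q: "Q \<in> sets lebesgue" "emeasure lebesgue Q = ennreal V" "0 < V" "V \<le> 1"
    and q: "1 < q" and p: "\<And>x. x \<in> Q \<Longrightarrow> q \<le> p x"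
  shows "(\<integral>\<^sup>+x. ennreal (indicator Q x * (V powr ((1 - q) / q)) powr (p x / (p x - 1))) \<partial>lebesgue) \<le> 1"
proof -
  define \<beta> where "\<beta> = V powr ((1 - q) / q)"
  have "(1 - q) / q \<le> 0" using q by (simp add: divide_nonpos_pos)
  hence "V powr 0 \<le> \<beta>" unfolding \<beta>_def using Q by (intro powr_mono') auto
  hence \<beta>: "1 \<le> \<beta>" using Q by simp
  have pointwise: "ennreal (indicator Q x * \<beta> powr (p x / (p x - 1)))
      \<le> ennreal (\<beta> powr (q / (q - 1))) * indicator Q x" for x
  proof (cases "x \<in> Q")
    case True
    have "p x / (p x - 1) \<le> q / (q - 1)" using p[OF True] q by (simp add: field_simps)
    hence "\<beta> powr (p x / (p x - 1)) \<le> \<beta> powr (q / (q - 1))" using \<beta> by (intro powr_mono) auto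
    thus ?thesis using True by (simp add: ennreal_leI)
  qed simp
  have "(\<integral>\<^sup>+x. ennreal (indicator Q x * \<beta> powr (p x / (p x - 1))) \<partial>lebesgue)
      \<le> (\<integral>\<^sup>+x. ennreal (\<beta> powr (q / (q - 1))) * indicator Q x \<partial>lebesgue)"
    by (intro nn_integral_mono pointwise)
  also have "\<dots> = ennreal (\<beta> powr (q / (q - 1)) * V)"
    using Q by (simp add: nn_integral_cmult_indicator ennreal_mult')
  also have "\<beta> powr (q / (q - 1)) * V = 1"
    unfolding \<beta>_def using Q q by (intro conjugate_powr_mult_self) auto
  finally show ?thesis unfolding \<beta>_def by simp
qed

lemma exponent_gap_mult_neg_ln_le:
  fixes l d n gap C0 G :: real
  assumes l: "0 < l" "l \<le> 1" and d: "0 \<le> d" "d \<le> n * l" and n: "1 \<le> n"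
    and gap: "0 \<le> gap" "gap \<le> G" and C0: "0 < C0"
    and LH: "0 < d \<Longrightarrow> d \<le> 1/2 \<Longrightarrow> gap \<le> C0 / (- ln d)"
    and d0: "d = 0 \<Longrightarrow> gap = 0"
  shows "gap * (- ln l) \<le> C0 + G * ln (2 * n)"
proof -
  have "0 \<le> G * ln (2 * n)" using gap n by simp
  consider "d = 0" | "0 < d" "d \<le> 1/2" | "1/2 < d" using d by linarith
  then show ?thesis
  proof cases
    case 1
    then show ?thesis using d0 C0 \<open>0 \<le> G * ln (2 * n)\<close> by simp
  next
    case 2
    have "ln d \<le> ln (n * l)" using d 2 by (subst ln_le_cancel_iff) auto
    also have "\<dots> = ln n + ln l" using n l by (simp add: ln_mult)
    finally have "- ln l \<le> - ln d + ln n" by simp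
    hence "gap * (- ln l) \<le> gap * (- ln d) + gap * ln n"
      using gap mult_left_mono[of "- ln l" "- ln d + ln n" gap] by (simp add: algebra_simps)
    also have "gap * (- ln d) \<le> C0"
    proof -
      have lnd: "0 < - ln d" using 2 by (simp add: ln_less_zero)
      have "gap * (- ln d) \<le> C0 / (- ln d) * (- ln d)" using LH[OF 2] lnd by (intro mult_right_mono) auto
      also have "\<dots> = C0" using lnd by simp
      finally show ?thesis .
    qed
    also have "gap * ln n \<le> G * ln (2 * n)"
      using gap n by (intro mult_mono) auto
    finally show ?thesis by simp
  next
    case 3
    hence "1 / (2 * n) < l" using d n by (simp add: field_simps)
    hence "ln (1 / (2 * n)) < ln l" using n l by (subst ln_less_cancel_iff) auto
    hence "- ln l < ln (2 * n)" using n by (simp add: ln_div)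
    hence "gap * (- ln l) \<le> G * ln (2 * n)" using gap l by (intro mult_mono) auto
    then show ?thesis using C0 by simp
  qed
qed

lemma cube_powr_exponent_gap_le:
  fixes p :: "'a::euclidean_space \<Rightarrow> real"
  defines "n \<equiv> real DIM('a)"
  assumes l: "0 < l" "l \<le> 1" and xy: "x \<in> cube a l" "y \<in> cube a l"
    and gap: "p y \<le> p x" "p x - p y \<le> G" and py: "1 \<le> p y" and C0: "0 < C0"
    and LH: "\<And>x y. 0 < norm (x - y) \<Longrightarrow> norm (x - y) \<le> 1/2 \<Longrightarrow>
      \<bar>p x - p y\<bar> \<le> C0 / (- ln (norm (x - y)))"
  shows "(l ^ DIM('a)) powr ((p y - p x) / p y) \<le> exp (n * (C0 + G * ln (2 * n)))"
proof -
  define gap where "gap = p x - p y"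
  have n: "1 \<le> n" unfolding n_def by (simp add: DIM_positive Suc_le_eq)
  have "gap * (- ln l) \<le> C0 + G * ln (2 * n)"
  proof (rule exponent_gap_mult_neg_ln_le[OF l _ _ n _ _ C0])
    show "norm (x - y) \<le> n * l" unfolding n_def by (rule norm_diff_le_cube[OF xy])
  qed (use gap LH[of x y] in \<open>auto simp: gap_def\<close>)
  moreover have "0 \<le> gap * (- ln l)" using gap l unfolding gap_def by (intro mult_nonneg_nonneg) auto
  hence "n * (gap * (- ln l)) / p y \<le> n * (gap * (- ln l))"
    using n py mult_nonneg_nonneg[of n "gap * (- ln l)"] by (intro divide_left_mono[of 1, simplified]) auto
  ultimately have "n * (gap * (- ln l)) / p y \<le> n * (C0 + G * ln (2 * n))"
    using n by (smt (verit) mult_left_mono)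
  moreover have "(l ^ DIM('a)) powr ((p y - p x) / p y) = exp (n * (gap * (- ln l)) / p y)"
    using l unfolding n_def gap_def by (simp add: powr_def ln_realpow field_simps)
  ultimately show ?thesis by simp
qed

(* In the paper's notation q is p_- = p_infinity, s is p_+, and CR is the constant of w in RH_s. *)
locale variable_exponent_weight =
  fixes p w :: "'a::euclidean_space \<Rightarrow> real" and q s CR :: real
  assumes p_measurable: "p \<in> borel_measurable lebesgue"
    and LH0: "LH0 p" and LH_infty: "LH_infty p q"
    and p_lower: "\<And>x. q \<le> p x" and p_upper: "\<And>x. p x \<le> s" and q_gt_1: "1 < q"
    and weight: "weight w" and CR: "0 < CR"
    and RH_cube: "\<And>a l. 0 < l \<Longrightarrow> set_integrable lebesgue (cube a l) (\<lambda>x. w x powr s) \<and>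
      ((LINT x:cube a l|lebesgue. w x powr s) / measure lebesgue (cube a l)) powr (1/s)
        \<le> CR * ((LINT x:cube a l|lebesgue. w x) / measure lebesgue (cube a l))"
begin

lemma cube_norm_bounds:
  fixes a :: 'a and l r B D :: real
  defines "Q \<equiv> cube a l"
  assumes l: "0 < l" and r: "1 < r" "\<And>x. x \<in> Q \<Longrightarrow> r \<le> p x"
    and B: "\<And>x. x \<in> Q \<Longrightarrow> (l ^ DIM('a)) powr ((r - p x) / r) \<le> B"
    and D: "(\<integral>\<^sup>+x. ennreal (indicator Q x * ((l ^ DIM('a)) powr ((1 - r) / r)) powr (p x / (p x - 1)))
      \<partial>lebesgue) \<le> ennreal D" "0 \<le> D"
  shows "(LINT x|lebesgue. indicator Q x * w x powr r) powr (1/r) / (2 * CR * (1 + D))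
      \<le> weighted_norm p w (indicator Q)"
    and "weighted_norm p w (indicator Q)
      \<le> max 1 (B * (1 + (2 * CR) powr s)) * (LINT x|lebesgue. indicator Q x * w x powr r) powr (1/r)"
proof -
  have V: "measure lebesgue Q = l ^ DIM('a)" unfolding Q_def by (rule measure_cube[OF l])
  have fin: "emeasure lebesgue Q < \<infinity>" unfolding Q_def using emeasure_cube[OF l, of a] by simp
  have iw: "integrable lebesgue (\<lambda>x. indicator Q x * w x)"
    using weight unfolding weight_def set_integrable_def Q_def cube_def by simp
  have wpos: "AE x in lebesgue. 0 < w x" using weight unfolding weight_def by simp
  have iws: "integrable lebesgue (\<lambda>x. indicator Q x * w x powr s)"
    using RH_cube[OF l, of a] unfolding set_integrable_def Q_def by simp
  have RHQ: "((LINT x|lebesgue. indicator Q x * w x powr s) / measure lebesgue Q) powr (1/s)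
      \<le> CR * ((LINT x|lebesgue. indicator Q x * w x) / measure lebesgue Q)"
    using RH_cube[OF l, of a] unfolding set_lebesgue_integral_def Q_def by simp
  note bounds = weighted_norm_indicator_bounds[OF p_measurable sets_cube[of a l, folded Q_def] fin _ iw iws
      wpos RHQ CR r(1) _ _ _ D[folded V]]
  have "0 < measure lebesgue Q" using l V by simp
  moreover have "r \<le> s" using r(1) p_upper[of a] r(2)[of a] l
    unfolding Q_def cube_def by (auto simp: mem_box inner_add_left)
  ultimately show "(LINT x|lebesgue. indicator Q x * w x powr r) powr (1/r) / (2 * CR * (1 + D))
      \<le> weighted_norm p w (indicator Q)"
    and "weighted_norm p w (indicator Q)
      \<le> max 1 (B * (1 + (2 * CR) powr s)) * (LINT x|lebesgue. indicator Q x * w x powr r) powr (1/r)"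
    using bounds[of B] r p_upper B V by auto
qed

lemma large_cube_bounds:
  "\<exists>c1>0. \<exists>c2>0. \<forall>a l. 1 < l \<longrightarrow>
    c1 * (LINT x|lebesgue. indicator (cube a l) x * w x powr q) powr (1/q)
      \<le> weighted_norm p w (indicator (cube a l)) \<and>
    weighted_norm p w (indicator (cube a l))
      \<le> c2 * (LINT x|lebesgue. indicator (cube a l) x * w x powr q) powr (1/q)"
proof -
  obtain C where decay: "\<And>x. \<bar>p x - q\<bar> * ln (exp 1 + norm x) \<le> C"
    using LH_infty_decay[OF LH_infty] by blast
  define D where "D = exp (real DIM('a) * (s - 1) / s * C / (q - 1)^2) + 2 ^ DIM('a)"
  have "0 \<le> D" unfolding D_def by (simp add: add_nonneg_nonneg)
  define c1 where "c1 = 1 / (2 * CR * (1 + D))"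
  define c2 where "c2 = max 1 (1 * (1 + (2 * CR) powr s))"
  have "c1 * (LINT x|lebesgue. indicator (cube a l) x * w x powr q) powr (1/q)
      \<le> weighted_norm p w (indicator (cube a l)) \<and>
    weighted_norm p w (indicator (cube a l))
      \<le> c2 * (LINT x|lebesgue. indicator (cube a l) x * w x powr q) powr (1/q)"
    if "1 < l" for a l
  proof -
    have l: "0 < l" and V: "1 \<le> l ^ DIM('a)" using that by auto
    have B: "(l ^ DIM('a)) powr ((q - p x) / q) \<le> 1" for x
    proof -
      have "(q - p x) / q \<le> 0" using p_lower[of x] q_gt_1 by (simp add: divide_nonpos_pos)
      hence "(l ^ DIM('a)) powr ((q - p x) / q) \<le> (l ^ DIM('a)) powr 0" using V by (intro powr_mono) auto
      thus ?thesis using l by simp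
    qed
    have "(\<integral>\<^sup>+x. ennreal (indicator (cube a l) x * ((l ^ DIM('a)) powr ((1 - q) / q)) powr (p x / (p x - 1)))
      \<partial>lebesgue) \<le> ennreal D"
      unfolding D_def
    proof (rule conjugate_integral_le_large[OF sets_cube emeasure_cube[OF l] V q_gt_1 p_lower p_upper])
      show "(p x - q) * ln (exp 1 + norm x) \<le> C" for x
        using decay[of x] p_lower[of x] by simp
    qed
    from cube_norm_bounds[OF l q_gt_1 p_lower B this \<open>0 \<le> D\<close>] show ?thesis
      unfolding c1_def c2_def by simp
  qed
  moreover have "0 < c1" unfolding c1_def using CR \<open>0 \<le> D\<close> by simp
  moreover have "0 < c2" unfolding c2_def by (simp add: add_pos_nonneg less_max_iff_disj)
  ultimately show ?thesis by blast
qed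

lemma small_cube_bounds:
  "\<exists>c1>0. \<exists>c2>0. \<forall>a l. 0 < l \<and> l \<le> 1 \<longrightarrow> (let r = ess_inf_on p (cube a l) in
    c1 * (LINT x|lebesgue. indicator (cube a l) x * w x powr r) powr (1/r)
      \<le> weighted_norm p w (indicator (cube a l)) \<and>
    weighted_norm p w (indicator (cube a l))
      \<le> c2 * (LINT x|lebesgue. indicator (cube a l) x * w x powr r) powr (1/r))"
proof -
  obtain C where bounded: "\<And>x. \<bar>p x - q\<bar> \<le> C"
    using LH_infty_bounded[OF LH_infty] by blast
  obtain C0 where C0: "0 < C0" "\<And>x y. 0 < norm (x - y) \<Longrightarrow> norm (x - y) \<le> 1/2 \<Longrightarrow>
      \<bar>p x - p y\<bar> \<le> C0 / (- ln (norm (x - y)))"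
    using LH0 unfolding LH0_def by blast
  define n where "n = real DIM('a)"
  define B where "B = exp (n * (C0 + 2 * C * ln (2 * n)))"
  define c1 where "c1 = 1 / (2 * CR * (1 + 1))"
  define c2 where "c2 = max 1 (B * (1 + (2 * CR) powr s))"
  have "c1 * (LINT x|lebesgue. indicator (cube a l) x * w x powr r) powr (1/r)
      \<le> weighted_norm p w (indicator (cube a l)) \<and>
    weighted_norm p w (indicator (cube a l))
      \<le> c2 * (LINT x|lebesgue. indicator (cube a l) x * w x powr r) powr (1/r)"
    if l: "0 < l" "l \<le> 1" and r: "r = ess_inf_on p (cube a l)" for a l r
  proof -
    obtain y where y: "y \<in> cube a l" "r = p y" "\<And>x. x \<in> cube a l \<Longrightarrow> p y \<le> p x"
      using ess_inf_on_cube_attained[OF LH0_imp_continuous[OF LH0] l(1)] r by blast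
    have "1 < r" using y(2) p_lower[of y] q_gt_1 by simp
    have B: "(l ^ DIM('a)) powr ((p y - p x) / p y) \<le> B" if "x \<in> cube a l" for x
      unfolding B_def n_def
    proof (rule cube_powr_exponent_gap_le[OF l that y(1) y(3)[OF that] _ _ C0])
      show "p x - p y \<le> 2 * C" using bounded[of x] bounded[of y] by (simp add: abs_le_iff)
      show "1 \<le> p y" using \<open>1 < r\<close> y(2) by simp
    qed
    have "(\<integral>\<^sup>+x. ennreal (indicator (cube a l) x * ((l ^ DIM('a)) powr ((1 - p y) / p y))
        powr (p x / (p x - 1))) \<partial>lebesgue) \<le> ennreal 1"
      using conjugate_integral_le_small[OF sets_cube emeasure_cube[OF l(1)] _ _ _ y(3)]
        l \<open>1 < r\<close> y(2) by (simp add: power_le_one)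
    from cube_norm_bounds[OF l(1) \<open>1 < r\<close>[unfolded y(2)] y(3) B this] show ?thesis
      unfolding y(2) c1_def c2_def by simp
  qed
  moreover have "0 < c1" unfolding c1_def using CR by simp
  moreover have "0 < c2" unfolding c2_def by (simp add: add_pos_nonneg less_max_iff_disj)
  ultimately show ?thesis unfolding Let_def by blast
qed

lemma cube_bounds:
  "\<exists>c1>0. \<exists>c2>0. \<forall>a l. l > 0 \<longrightarrow>
    (let Q = cube a l;
         E = (if l > 1
              then (LINT x:Q|lebesgue. w x powr q) powr (1 / q)
              else (LINT x:Q|lebesgue. w x powr ess_inf_on p Q) powr (1 / ess_inf_on p Q))
     in c1 * E \<le> weighted_norm p w (indicator Q) \<and> weighted_norm p w (indicator Q) \<le> c2 * E)"
proof -
  obtain c1 c2 where "0 < c1" "0 < c2" and large: "\<And>a l. 1 < l \<Longrightarrow>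
      c1 * (LINT x|lebesgue. indicator (cube a l) x * w x powr q) powr (1 / q)
        \<le> weighted_norm p w (indicator (cube a l)) \<and>
      weighted_norm p w (indicator (cube a l))
        \<le> c2 * (LINT x|lebesgue. indicator (cube a l) x * w x powr q) powr (1 / q)"
    using large_cube_bounds by blast
  obtain d1 d2 where "0 < d1" "0 < d2" and small: "\<And>a l. 0 < l \<Longrightarrow> l \<le> 1 \<Longrightarrow>
      (let r = ess_inf_on p (cube a l) in
      d1 * (LINT x|lebesgue. indicator (cube a l) x * w x powr r) powr (1/r)
        \<le> weighted_norm p w (indicator (cube a l)) \<and>
      weighted_norm p w (indicator (cube a l))
        \<le> d2 * (LINT x|lebesgue. indicator (cube a l) x * w x powr r) powr (1/r))"
    using small_cube_bounds by blast
  have weaken: "c' * E \<le> N \<and> N \<le> d' * E"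
    if "c * E \<le> N \<and> N \<le> d * E" "c' \<le> c" "d \<le> d'" "0 \<le> E" for c c' d d' E N :: real
    using that mult_right_mono[of c' c E] mult_right_mono[of d d' E] by linarith
  have "let Q = cube a l;
         E = (if l > 1
              then (LINT x:Q|lebesgue. w x powr q) powr (1 / q)
              else (LINT x:Q|lebesgue. w x powr ess_inf_on p Q) powr (1 / ess_inf_on p Q))
     in min c1 d1 * E \<le> weighted_norm p w (indicator Q) \<and> weighted_norm p w (indicator Q) \<le> max c2 d2 * E"
    if "0 < l" for a l
  proof (cases "1 < l")
    case True
    show ?thesis using weaken[OF large[OF True] min.cobounded1 max.cobounded1 powr_ge_zero] True
      unfolding Let_def set_lebesgue_integral_def by simp
  next
    case False
    show ?thesis
      using weaken[OF small[OF \<open>0 < l\<close>, unfolded Let_def] min.cobounded2 max.cobounded2 powr_ge_zero] False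
      unfolding Let_def set_lebesgue_integral_def by simp
  qed
  moreover have "0 < min c1 d1" "0 < max c2 d2" using \<open>0 < c1\<close> \<open>0 < d1\<close> \<open>0 < c2\<close> by auto
  ultimately show ?thesis by blast
qed

end

lemma P_log_imp_exponent_bounds:
  fixes p :: "'a::euclidean_space \<Rightarrow> real"
  assumes "P_log p"
  shows "p_minus p \<le> p x" and "p x \<le> p_plus p"
proof -
  obtain pinf where "LH_infty p pinf" and "LH0 p" using assms unfolding P_log_def by blast
  then obtain C where C: "\<And>x. \<bar>p x - pinf\<bar> \<le> C" using LH_infty_bounded by blast
  have "pinf - C \<le> p x" "p x \<le> pinf + C" for x
    using C[of x] unfolding abs_le_iff by linarith+
  hence "bdd_below (range p)" "bdd_above (range p)" by (meson bdd_belowI2, meson bdd_aboveI2)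
  with LH0_imp_continuous[OF \<open>LH0 p\<close>] show "p_minus p \<le> p x" "p x \<le> p_plus p"
    using p_minus_le le_p_plus by blast+
qed

theorem lemma3p6:
  fixes p w :: "'a::euclidean_space \<Rightarrow> real"
  assumes "P_log p"
    and "1 < p_minus p"
    and "LH_infty p (p_minus p)"
    and "weight w"
    and "\<exists>C \<gamma>. \<forall>x. w x \<le> C * (1 + norm x) powr \<gamma>"
    and "RH (p_plus p) w"
  shows "\<exists>c1>0. \<exists>c2>0. \<forall>a l. l > 0 \<longrightarrow>
    (let Q = cube a l;
         E = (if l > 1
              then (LINT x:Q|lebesgue. w x powr p_minus p) powr (1 / p_minus p)
              else (LINT x:Q|lebesgue. w x powr ess_inf_on p Q) powr (1 / ess_inf_on p Q))
     in c1 * E \<le> weighted_norm p w (indicator Q) \<and> weighted_norm p w (indicator Q) \<le> c2 * E)"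
proof -
  obtain CR where "0 < CR" and "\<And>a l. 0 < l \<Longrightarrow>
      set_integrable lebesgue (cube a l) (\<lambda>x. w x powr p_plus p) \<and>
      ((LINT x:cube a l|lebesgue. w x powr p_plus p) / measure lebesgue (cube a l)) powr (1 / p_plus p)
        \<le> CR * ((LINT x:cube a l|lebesgue. w x) / measure lebesgue (cube a l))"
    using assms(6) unfolding RH_def by blast
  then interpret variable_exponent_weight p w "p_minus p" "p_plus p" CR
    using assms P_log_imp_exponent_bounds[OF assms(1)] unfolding P_log_def by unfold_locales auto
  show ?thesis by (rule cube_bounds)
qed

end
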